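(* Let $n,m$ be positive integers. Let $\boldsymbol\alpha,\boldsymbol\beta\in\mathbb{R}^m_{\geq 0}$ with $\sum_i\alpha_i=\sum_j\beta_j=1/n$, and let $\mathbf C_0,\dots,\mathbf C_{n-1}\in\mathbb{R}^{m\times m}_{\geq 0}$, writing $C_{ijk}$ for the $(i,j)$-entry of $\mathbf C_k$. Consider the problem $$\text{(P)}\quad \min_{\mathbf T_0,\dots,\mathbf T_{n-1}\in\mathbb{R}^{m\times m}_{\geq 0}}\ \sum_{k=0}^{n-1}\langle \mathbf C_k,\mathbf T_k\rangle\quad\text{s.t.}\quad \sum_{k=0}^{n-1}\mathbf T_k\mathbf 1_m=\boldsymbol\alpha,\ \ \sum_{k=0}^{n-1}\mathbf T_k^\top\mathbf 1_m=\boldsymbol\beta,$$ and the small problem $$\text{(S)}\quad \min_{\mathbf S\in\mathbb{R}^{m\times m}_{\geq 0}}\ \langle\mathbf G,\mathbf S\rangle\quad\text{s.t.}\quad \mathbf S\mathbf 1_m=\boldsymbol\alpha,\ \ \mathbf S^\top\mathbf 1_m=\boldsymbol\beta,$$ where $G_{ij}:=\min_{0\le k\le n-1}C_{ijk}$. Let $\mathbf S^*$ be an optimal solution of (S). Define $\mathbf T^*_0,\dots,\mathbf T^*_{n-1}$ by $T^*_{ijk}=S^*_{ij}$ if $k=\min\big(\operatorname{argmin}_{0\le k'\le n-1}C_{ijk'}\big)$ and $T^*_{ijk}=0$ otherwise, where $T^*_{ijk}$ denotes the $(i,j)$-entry of $\mathbf T^*_k$. Then $(\mathbf T^*_k)_{k=0,\dots,n-1}$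 is an optimal solution of (P), and the optimal objective value of (P) equals that of (S).
   Context: $\langle\mathbf X,\mathbf Y\rangle=\sum_{i,j}X_{ij}Y_{ij}$ is the Frobenius inner product and $\mathbf 1_m$ is the all-ones vector in $\mathbb{R}^m$. $\operatorname{argmin}_{k'}C_{ijk'}$ is the set of indices attaining the minimum, and the smallest such index is taken. *)

theory Defs
  imports Complex_Main
begin

text \<open>A matrix is nat => nat => real, a vector nat => real,
  a family of n matrices is nat => nat => nat => real with T i j k the (i,j)-entry of T_k.\<close>

definition feasP :: "nat \<Rightarrow> nat \<Rightarrow> (nat \<Rightarrow> real) \<Rightarrow> (nat \<Rightarrow> real)
    \<Rightarrow> (nat \<Rightarrow> nat \<Rightarrow> nat \<Rightarrow> real) \<Rightarrow> bool" where
  "feasP n m \<alpha> \<beta> T \<longleftrightarrow>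
     (\<forall>i<m. \<forall>j<m. \<forall>k<n. T i j k \<ge> 0) \<and>
     (\<forall>i<m. (\<Sum>k<n. \<Sum>j<m. T i j k) = \<alpha> i) \<and>
     (\<forall>j<m. (\<Sum>k<n. \<Sum>i<m. T i j k) = \<beta> j)"

definition objP :: "nat \<Rightarrow> nat \<Rightarrow> (nat \<Rightarrow> nat \<Rightarrow> nat \<Rightarrow> real)
    \<Rightarrow> (nat \<Rightarrow> nat \<Rightarrow> nat \<Rightarrow> real) \<Rightarrow> real" where
  "objP n m C T = (\<Sum>k<n. \<Sum>i<m. \<Sum>j<m. C i j k * T i j k)"

definition feasS :: "nat \<Rightarrow> (nat \<Rightarrow> real) \<Rightarrow> (nat \<Rightarrow> real)
    \<Rightarrow> (nat \<Rightarrow> nat \<Rightarrow> real) \<Rightarrow> bool" where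
  "feasS m \<alpha> \<beta> S \<longleftrightarrow>
     (\<forall>i<m. \<forall>j<m. S i j \<ge> 0) \<and>
     (\<forall>i<m. (\<Sum>j<m. S i j) = \<alpha> i) \<and>
     (\<forall>j<m. (\<Sum>i<m. S i j) = \<beta> j)"

definition objS :: "nat \<Rightarrow> (nat \<Rightarrow> nat \<Rightarrow> real) \<Rightarrow> (nat \<Rightarrow> nat \<Rightarrow> real) \<Rightarrow> real" where
  "objS m G S = (\<Sum>i<m. \<Sum>j<m. G i j * S i j)"

definition optP :: "nat \<Rightarrow> nat \<Rightarrow> (nat \<Rightarrow> real) \<Rightarrow> (nat \<Rightarrow> real)
    \<Rightarrow> (nat \<Rightarrow> nat \<Rightarrow> nat \<Rightarrow> real) \<Rightarrow> (nat \<Rightarrow> nat \<Rightarrow> nat \<Rightarrow> real) \<Rightarrow> bool" where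
  "optP n m \<alpha> \<beta> C T \<longleftrightarrow> feasP n m \<alpha> \<beta> T \<and>
     (\<forall>T'. feasP n m \<alpha> \<beta> T' \<longrightarrow> objP n m C T \<le> objP n m C T')"

definition optS :: "nat \<Rightarrow> (nat \<Rightarrow> real) \<Rightarrow> (nat \<Rightarrow> real)
    \<Rightarrow> (nat \<Rightarrow> nat \<Rightarrow> real) \<Rightarrow> (nat \<Rightarrow> nat \<Rightarrow> real) \<Rightarrow> bool" where
  "optS m \<alpha> \<beta> G S \<longleftrightarrow> feasS m \<alpha> \<beta> S \<and>
     (\<forall>S'. feasS m \<alpha> \<beta> S' \<longrightarrow> objS m G S \<le> objS m G S')"

definition Gmin :: "nat \<Rightarrow> (nat \<Rightarrow> nat \<Rightarrow> nat \<Rightarrow> real) \<Rightarrow> nat \<Rightarrow> nat \<Rightarrow> real" where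
  "Gmin n C i j = Min ((\<lambda>k. C i j k) ` {..<n})"

definition kstar :: "nat \<Rightarrow> (nat \<Rightarrow> nat \<Rightarrow> nat \<Rightarrow> real) \<Rightarrow> nat \<Rightarrow> nat \<Rightarrow> nat" where
  "kstar n C i j = (LEAST k. k < n \<and> (\<forall>k'<n. C i j k \<le> C i j k'))"

definition Tstar :: "nat \<Rightarrow> (nat \<Rightarrow> nat \<Rightarrow> nat \<Rightarrow> real) \<Rightarrow> (nat \<Rightarrow> nat \<Rightarrow> real)
    \<Rightarrow> nat \<Rightarrow> nat \<Rightarrow> nat \<Rightarrow> real" where
  "Tstar n C S i j k = (if k = kstar n C i j then S i j else 0)"

end

theory Submission
  imports Defs
begin

text \<open>Only the layer sums of a plan of (P) enter its constraints, and for fixed layer sums the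
  cost is minimised by putting all mass of entry (i,j) on a cheapest layer, where it costs G_ij.
  Hence collapsing the layers maps feasible plans of (P) onto feasible plans of (S) without
  increasing the cost, and T* is a feasible plan of (P) with the same cost as S*.\<close>

definition layer_sum :: "nat \<Rightarrow> (nat \<Rightarrow> nat \<Rightarrow> nat \<Rightarrow> real) \<Rightarrow> nat \<Rightarrow> nat \<Rightarrow> real" where
  "layer_sum n T i j = (\<Sum>k<n. T i j k)"

lemma Gmin_le: "k < n \<Longrightarrow> Gmin n C i j \<le> C i j k"
  unfolding Gmin_def by auto

lemma kstar_minimal:
  assumes "0 < n"
  shows "kstar n C i j < n" and "k < n \<Longrightarrow> C i j (kstar n C i j) \<le> C i j k"
proof -
  obtain k0 where "is_arg_min (C i j) (\<lambda>k. k \<in> {..<n}) k0"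
    using ex_is_arg_min_if_finite[of "{..<n}"] assms by blast
  then have "\<exists>k. k < n \<and> (\<forall>k'<n. C i j k \<le> C i j k')"
    unfolding is_arg_min_def by (metis lessThan_iff not_less)
  from LeastI_ex[OF this]
  show "kstar n C i j < n" and "k < n \<Longrightarrow> C i j (kstar n C i j) \<le> C i j k"
    unfolding kstar_def by auto
qed

lemma C_kstar_eq_Gmin: "0 < n \<Longrightarrow> C i j (kstar n C i j) = Gmin n C i j"
  unfolding Gmin_def by (rule Min_eqI[symmetric]) (auto simp: kstar_minimal)

lemma layer_sum_Tstar: "0 < n \<Longrightarrow> layer_sum n (Tstar n C S) = S"
  by (auto simp: layer_sum_def Tstar_def kstar_minimal fun_eq_iff)

lemma feasP_iff_layer_sum:
  "feasP n m \<alpha> \<beta> T \<longleftrightarrow>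
     (\<forall>i<m. \<forall>j<m. \<forall>k<n. 0 \<le> T i j k) \<and> feasS m \<alpha> \<beta> (layer_sum n T)"
  unfolding feasP_def feasS_def layer_sum_def
  by (auto simp: sum.swap[of _ "{..<n}"] intro!: sum_nonneg)

lemma objP_eq_sum_layers: "objP n m C T = (\<Sum>i<m. \<Sum>j<m. \<Sum>k<n. C i j k * T i j k)"
  unfolding objP_def by (subst sum.swap, rule sum.cong, simp, subst sum.swap, simp)

lemma objS_layer_sum_le_objP:
  assumes "\<forall>i<m. \<forall>j<m. \<forall>k<n. 0 \<le> T i j k"
  shows "objS m (Gmin n C) (layer_sum n T) \<le> objP n m C T"
  unfolding objS_def objP_eq_sum_layers layer_sum_def sum_distrib_left
  using assms by (intro sum_mono mult_right_mono Gmin_le) auto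

lemma objP_Tstar: "0 < n \<Longrightarrow> objP n m C (Tstar n C S) = objS m (Gmin n C) S"
proof -
  assume "0 < n"
  then have "(\<Sum>k<n. C i j k * Tstar n C S i j k) = Gmin n C i j * S i j" for i j
    by (simp add: Tstar_def if_distrib sum.delta' kstar_minimal C_kstar_eq_Gmin cong: if_cong)
  then show ?thesis
    by (simp add: objP_eq_sum_layers objS_def)
qed

lemma optP_Tstar:
  assumes "0 < n" and "optS m \<alpha> \<beta> (Gmin n C) S"
  shows "optP n m \<alpha> \<beta> C (Tstar n C S)"
proof -
  have feasS: "feasS m \<alpha> \<beta> S"
    and optimal: "\<And>S'. feasS m \<alpha> \<beta> S' \<Longrightarrow> objS m (Gmin n C) S \<le> objS m (Gmin n C) S'"
    using assms(2) unfolding optS_def by auto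
  have "feasP n m \<alpha> \<beta> (Tstar n C S)"
    using feasS unfolding feasP_iff_layer_sum layer_sum_Tstar[OF assms(1)]
    by (auto simp: feasS_def Tstar_def)
  moreover have "objP n m C (Tstar n C S) \<le> objP n m C T" if "feasP n m \<alpha> \<beta> T" for T
  proof -
    have "objP n m C (Tstar n C S) = objS m (Gmin n C) S"
      using assms(1) by (rule objP_Tstar)
    also have "\<dots> \<le> objS m (Gmin n C) (layer_sum n T)"
      using that by (intro optimal) (simp add: feasP_iff_layer_sum)
    also have "\<dots> \<le> objP n m C T"
      using that by (intro objS_layer_sum_le_objP) (simp add: feasP_iff_layer_sum)
    finally show ?thesis .
  qed
  ultimately show ?thesis
    unfolding optP_def by blast
qed

theorem theorem1:
  fixes n m :: nat and \<alpha> \<beta> :: "nat \<Rightarrow> real"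
    and C :: "nat \<Rightarrow> nat \<Rightarrow> nat \<Rightarrow> real" and S :: "nat \<Rightarrow> nat \<Rightarrow> real"
  assumes "n > 0" and "m > 0"
    and "\<forall>i<m. \<alpha> i \<ge> 0" and "\<forall>j<m. \<beta> j \<ge> 0"
    and "(\<Sum>i<m. \<alpha> i) = 1 / real n" and "(\<Sum>j<m. \<beta> j) = 1 / real n"
    and "\<forall>i<m. \<forall>j<m. \<forall>k<n. C i j k \<ge> 0"
    and "optS m \<alpha> \<beta> (Gmin n C) S"
  shows "optP n m \<alpha> \<beta> C (Tstar n C S)
    \<and> objP n m C (Tstar n C S) = objS m (Gmin n C) S
    \<and> (INF T\<in>{T. feasP n m \<alpha> \<beta> T}. objP n m C T)
        = (INF S'\<in>{S'. feasS m \<alpha> \<beta> S'}. objS m (Gmin n C) S')"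
proof -
  have optP: "optP n m \<alpha> \<beta> C (Tstar n C S)"
    using assms(1,8) by (rule optP_Tstar)
  have obj: "objP n m C (Tstar n C S) = objS m (Gmin n C) S"
    using assms(1) by (rule objP_Tstar)
  have "(INF T\<in>{T. feasP n m \<alpha> \<beta> T}. objP n m C T) = objP n m C (Tstar n C S)"
    using optP unfolding optP_def by (intro cInf_eq_minimum) auto
  moreover have "(INF S'\<in>{S'. feasS m \<alpha> \<beta> S'}. objS m (Gmin n C) S') = objS m (Gmin n C) S"
    using assms(8) unfolding optS_def by (intro cInf_eq_minimum) auto
  ultimately show ?thesis
    using optP obj by simp
qed

end
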